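(* Let $A$ and $B$ be finite groups, each with at least $2$ elements. For an integer $m\geq 1$, let $s_m$ be the number of elements $g\in A$ with $g^m=1$. For a divisor $n$ of $|B|$, let $d_n$ be the number of elements of $B$ of order $n$. Then $$a(A\wr B)=\sum_{m \mid |A|,\ n \mid |B|} \frac{m}{n}\left(\frac{s_m}{|A|}\right)^{n} d_{|B|/n}\,\tau\!\left(\frac{|A|}{m}\right),$$ where the sum runs over all positive divisors $m$ of $|A|$ and all positive divisors $n$ of $|B|$.
   Context: For a finite group $G$, the average order is $a(G)=\frac{1}{|G|}\sum_{g\in G}\mathrm{order}(g)$. For groups $A,B$, let $K=\prod_{b\in B}A$, on which $B$ acts by $x\cdot(\alpha_b)_b=(\alpha_{x^{-1}b})_b$ for $x\in B$; the wreath product $A\wr B$ is the semidirect product $K\rtimes B$ for this action. For a positive integer $n$, $\tau(n)=\prod_{p\mid n,\ p\text{ prime}}(1-p)$ (so $\tau(1)=1$). *)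

theory Defs
  imports "HOL-Algebra.Algebra" "HOL-Computational_Algebra.Primes"
begin

text \<open>Wreath product A wr B = K \<rtimes> B with K = functions carrier B \<rightarrow> carrier A,
  B acting by (x . alpha)(b) = alpha(x^-1 b).\<close>

definition wreath :: "('a, 'c) monoid_scheme \<Rightarrow> ('b, 'd) monoid_scheme
    \<Rightarrow> (('b \<Rightarrow> 'a) \<times> 'b) monoid" where
  "wreath A B =
     \<lparr> carrier = (carrier B \<rightarrow>\<^sub>E carrier A) \<times> carrier B,
       monoid.mult = (\<lambda>(\<alpha>, x) (\<beta>, y).
                 ((\<lambda>b\<in>carrier B. \<alpha> b \<otimes>\<^bsub>A\<^esub> \<beta> (inv\<^bsub>B\<^esub> x \<otimes>\<^bsub>B\<^esub> b)),
                  x \<otimes>\<^bsub>B\<^esub> y)),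
       one = ((\<lambda>b\<in>carrier B. \<one>\<^bsub>A\<^esub>), \<one>\<^bsub>B\<^esub>) \<rparr>"

definition avg_order :: "('a, 'c) monoid_scheme \<Rightarrow> real" where
  "avg_order G = (\<Sum>g\<in>carrier G. real (group.ord G g)) / real (card (carrier G))"

definition tau :: "nat \<Rightarrow> real" where
  "tau n = (\<Prod>p\<in>prime_factors n. 1 - real p)"

end

theory Submission
  imports Defs
begin

text \<open>
  The \<open>n\<close>-th power of \<open>(\<alpha>, x)\<close> in the wreath product has first component
  \<open>b \<mapsto> \<alpha>(b) \<alpha>(x^-1 b) ... \<alpha>(x^-(n-1) b)\<close>, so the order of \<open>(\<alpha>, x)\<close> is
  \<open>k = ord x\<close> times the lcm of the orders of the cycle products of length \<open>k\<close>.
  Along a right coset of \<open>\<langle>x\<rangle>\<close> these cycle products are rotations of each other, hence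
  have the same order, and replacing \<open>\<alpha>\<close> at one representative of each coset by its cycle
  product there is a bijection of \<open>B \<rightarrow> A\<close>. So exactly \<open>s_m^(|B|/k) |A|^(|B| - |B|/k)\<close>
  functions \<open>\<alpha>\<close> make that lcm divide \<open>m\<close>. A divisor \<open>L\<close> of \<open>|A|\<close> is recovered from
  such counts as \<open>L = \<Sum>\<^bsub>L | m | |A|\<^esub> m \<tau>(|A|/m)\<close>, which follows from
  \<open>\<Sum>\<^bsub>d | n\<^esub> d \<tau>(n/d) = 1\<close> (both sides are multiplicative and agree on prime powers).
  Summing over \<open>x\<close>, grouped by \<open>n = |B| / ord x\<close>, gives the formula.
\<close>

lemma div_eq_iff_div_eq:
  fixes n a b :: nat
  assumes "a dvd n" "b dvd n" "n > 0"
  shows "n div a = b \<longleftrightarrow> n div b = a"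
  using assms by (auto elim!: dvdE)

lemma card_preimage_bij_betw:
  assumes "bij_betw f D D" "S \<subseteq> D"
  shows "card {a \<in> D. f a \<in> S} = card S"
proof -
  have "f ` {a \<in> D. f a \<in> S} = S"
    using assms by (auto simp: bij_betw_def)
  then have "bij_betw f {a \<in> D. f a \<in> S} S"
    by (intro bij_betw_subset[OF assms(1)]) auto
  then show ?thesis by (rule bij_betw_same_card)
qed

lemma (in group) nat_pow_mult_shift:
  assumes "u \<in> carrier G" "v \<in> carrier G"
  shows "(v \<otimes> u) [^] n \<otimes> v = v \<otimes> (u \<otimes> v) [^] (n :: nat)"
proof (induction n)
  case (Suc n)
  have "(v \<otimes> u) [^] Suc n \<otimes> v = ((v \<otimes> u) [^] n \<otimes> v) \<otimes> (u \<otimes> v)"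
    using assms by (simp add: m_assoc)
  also have "\<dots> = v \<otimes> (u \<otimes> v) [^] Suc n"
    using assms by (simp add: Suc m_assoc)
  finally show ?case .
qed (use assms in simp)

lemma (in group) ord_mult_comm:
  assumes "u \<in> carrier G" "v \<in> carrier G"
  shows "ord (v \<otimes> u) = ord (u \<otimes> v)"
proof -
  have "(v \<otimes> u) [^] n = \<one> \<longleftrightarrow> (u \<otimes> v) [^] n = \<one>" for n :: nat
    using nat_pow_mult_shift[OF assms, of n] nat_pow_mult_shift[OF assms(2,1), of n] assms
    by (metis l_cancel_one' m_closed nat_pow_closed r_cancel_one r_one)
  then show ?thesis
    using assms by (simp add: ord_unique pow_eq_id)
qed

lemma tau_mult_coprime:
  assumes "coprime u v" "u > 0" "v > 0"
  shows "tau (u * v) = tau u * tau v"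
proof -
  have "prime_factors u \<inter> prime_factors v = {}"
    using assms(1) by (auto dest: coprime_common_divisor_nat simp: in_prime_factors_iff)
  then show ?thesis
    using assms by (simp add: tau_def prime_factors_product prod.union_disjoint)
qed

lemma tau_prime_power:
  assumes "Factorial_Ring.prime p" "j > 0"
  shows "tau (p ^ j) = 1 - real p"
  using assms by (simp add: tau_def prime_factorization_prime_power)

lemma sum_divisors_mult_coprime:
  fixes a b :: nat
  assumes "coprime a b"
  shows "(\<Sum>d | d dvd a * b. f d) = (\<Sum>x | x dvd a. \<Sum>y | y dvd b. f (x * y))"
proof (cases "a = 0 \<or> b = 0")
  case False
  have inj: "inj_on (\<lambda>(x, y). x * y) ({x. x dvd a} \<times> {y. y dvd b})"
  proof (rule inj_onI, clarsimp)
    fix x y x' y' assume h: "x dvd a" "y dvd b" "x' dvd a" "y' dvd b" "x * y = x' * y'"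
    have "coprime x y'" "coprime x' y" using h assms coprime_divisors by blast+
    then have "x dvd x'" "x' dvd x" using h(5)
      by (metis coprime_dvd_mult_left_iff dvd_triv_left)+
    then have "x = x'" by (rule dvd_antisym)
    moreover have "x \<noteq> 0" using h(1) False by auto
    ultimately show "x = x' \<and> y = y'" using h(5) by simp
  qed
  have "(\<lambda>(x, y). x * y) ` ({x. x dvd a} \<times> {y. y dvd b}) = {d. d dvd a * b}"
    by (auto intro: mult_dvd_mono elim!: dvd_productE)
  then show ?thesis
    using sum.reindex[OF inj, of f] by (simp add: sum.cartesian_product split_beta)
qed (use assms in auto)

lemma divisor_convolution_mult_coprime:
  fixes f g :: "nat \<Rightarrow> 'a :: comm_semiring_1"
  assumes "coprime a b" "a > 0" "b > 0"
    and f: "\<And>u v. coprime u v \<Longrightarrow> u > 0 \<Longrightarrow> v > 0 \<Longrightarrow> f (u * v) = f u * f v"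
    and g: "\<And>u v. coprime u v \<Longrightarrow> u > 0 \<Longrightarrow> v > 0 \<Longrightarrow> g (u * v) = g u * g v"
  shows "(\<Sum>d | d dvd a * b. f d * g (a * b div d))
       = (\<Sum>d | d dvd a. f d * g (a div d)) * (\<Sum>d | d dvd b. f d * g (b div d))"
proof -
  have "f (x * y) * g (a * b div (x * y)) = f x * g (a div x) * (f y * g (b div y))"
    if "x dvd a" "y dvd b" for x y
  proof -
    have "a div x dvd a" "b div y dvd b"
      using that by (metis dvd_div_mult_self dvd_triv_left)+
    then have "coprime x y" "coprime (a div x) (b div y)"
      using that assms(1) by (auto intro: coprime_divisors)
    moreover have "x > 0" "y > 0" "a div x > 0" "b div y > 0" "a * b div (x * y) = a div x * (b div y)"
      using that assms(2,3) by (auto simp: div_mult_div_if_dvd elim!: dvdE)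
    ultimately show ?thesis by (simp add: f g mult_ac)
  qed
  then show ?thesis
    by (simp add: sum_divisors_mult_coprime[OF assms(1)] sum_product)
qed

lemma sum_divisors_times_tau_prime_power:
  assumes p: "Factorial_Ring.prime p"
  shows "(\<Sum>d | d dvd p ^ a. real d * tau (p ^ a div d)) = 1"
proof -
  have "inj_on (\<lambda>i. p ^ i) {..a}"
    using prime_gt_1_nat[OF p] by (auto intro: inj_onI)
  moreover have "{d. d dvd p ^ a} = (\<lambda>i. p ^ i) ` {..a}"
    using divides_primepow_nat[OF p] by auto
  ultimately have "(\<Sum>d | d dvd p ^ a. real d * tau (p ^ a div d))
      = (\<Sum>i\<le>a. real p ^ i * tau (p ^ (a - i)))"
    using p by (simp add: sum.reindex power_diff prime_gt_0_nat)
  also have "\<dots> = (\<Sum>i<a. real p ^ i * tau (p ^ (a - i))) + real p ^ a"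
    by (simp add: lessThan_Suc_atMost[symmetric] tau_def)
  also have "(\<Sum>i<a. real p ^ i * tau (p ^ (a - i))) = (\<Sum>i<a. real p ^ i * (1 - real p))"
    using p by (intro sum.cong refl) (simp add: tau_prime_power)
  also have "(\<Sum>i<a. real p ^ i * (1 - real p)) = 1 - real p ^ a"
    by (induction a) (auto simp: algebra_simps)
  finally show ?thesis by simp
qed

lemma sum_divisors_times_tau:
  assumes "n > 0"
  shows "(\<Sum>d | d dvd n. real d * tau (n div d)) = 1"
  using assms
proof (induction n rule: less_induct)
  case (less n)
  show ?case
  proof (cases "n = 1")
    case True
    then show ?thesis by (simp add: tau_def)
  next
    case False
    then obtain p where p: "Factorial_Ring.prime p" "p dvd n"
      using prime_factor_nat by blast
    then have "n \<noteq> 0" "\<not> is_unit p" using less.prems not_prime_unit by auto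
    then obtain y where y: "n = p ^ multiplicity p n * y" "\<not> p dvd y"
      by (rule multiplicity_decompose')
    define q where "q = p ^ multiplicity p n"
    have "multiplicity p n > 0"
      using p \<open>n \<noteq> 0\<close> by (simp add: prime_multiplicity_gt_zero_iff)
    then have "1 < q"
      unfolding q_def using prime_gt_1_nat[OF p(1)] by (intro one_less_power)
    moreover have "y > 0" using y(1) less.prems by (auto intro: gr0I)
    ultimately have "y < n" using y(1) unfolding q_def[symmetric] by simp
    have "coprime q y"
      unfolding q_def using p y(2) by (simp add: prime_imp_coprime)
    then have "(\<Sum>d | d dvd q * y. real d * tau (q * y div d))
        = (\<Sum>d | d dvd q. real d * tau (q div d)) * (\<Sum>d | d dvd y. real d * tau (y div d))"
      using \<open>1 < q\<close> \<open>y > 0\<close> by (intro divisor_convolution_mult_coprime) (auto simp: tau_mult_coprime)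
    then show ?thesis
      using y(1) less.IH[OF \<open>y < n\<close> \<open>y > 0\<close>] sum_divisors_times_tau_prime_power[OF p(1)]
      unfolding q_def by simp
  qed
qed

lemma sum_multiples_times_tau:
  assumes "l dvd n" "n > 0"
  shows "(\<Sum>m | m dvd n \<and> l dvd m. real m * tau (n div m)) = real l"
proof -
  obtain k where k: "n = l * k" using assms(1) by (rule dvdE)
  with assms(2) have pos: "l > 0" "k > 0" by auto
  have "{m. m dvd n \<and> l dvd m} = (\<lambda>j. l * j) ` {j. j dvd k}"
    using k pos by (auto simp: dvd_def)
  moreover have "inj_on (\<lambda>j. l * j) {j. j dvd k}"
    using pos by (auto intro: inj_onI)
  ultimately have "(\<Sum>m | m dvd n \<and> l dvd m. real m * tau (n div m))
      = real l * (\<Sum>j | j dvd k. real j * tau (k div j))"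
    using k pos by (simp add: sum.reindex sum_distrib_left mult.assoc)
  then show ?thesis using sum_divisors_times_tau[OF pos(2)] by simp
qed

lemma sum_divisor_values_as_counts:
  assumes "finite S" "n > 0" "\<And>x. x \<in> S \<Longrightarrow> f x dvd n"
  shows "(\<Sum>x\<in>S. real (f x)) = (\<Sum>m | m dvd n. real m * tau (n div m) * card {x\<in>S. f x dvd m})"
proof -
  have fin: "finite {m. m dvd n}" using assms(2) by simp
  have "(\<Sum>x\<in>S. real (f x)) = (\<Sum>x\<in>S. \<Sum>m | m dvd n. if f x dvd m then real m * tau (n div m) else 0)"
    using assms by (intro sum.cong refl)
      (simp add: sum.inter_filter[OF fin, symmetric] sum_multiples_times_tau conj_commute)
  also have "\<dots> = (\<Sum>m | m dvd n. real m * tau (n div m) * card {x\<in>S. f x dvd m})"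
    using assms(1) by (subst sum.swap) (simp add: sum.If_cases Int_def mult_ac)
  finally show ?thesis .
qed

primrec cycle_prod :: "('a, 'c) monoid_scheme \<Rightarrow> ('b, 'd) monoid_scheme
    \<Rightarrow> ('b \<Rightarrow> 'a) \<Rightarrow> 'b \<Rightarrow> nat \<Rightarrow> 'b \<Rightarrow> 'a" where
  "cycle_prod A B \<alpha> x 0 b = \<one>\<^bsub>A\<^esub>"
| "cycle_prod A B \<alpha> x (Suc n) b = cycle_prod A B \<alpha> x n b \<otimes>\<^bsub>A\<^esub> \<alpha> ((inv\<^bsub>B\<^esub> x) [^]\<^bsub>B\<^esub> n \<otimes>\<^bsub>B\<^esub> b)"

locale wreath_groups = A: group A + B: group B
  for A :: "('a, 'c) monoid_scheme" and B :: "('b, 'd) monoid_scheme"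
begin

abbreviation cyc where "cyc \<equiv> cycle_prod A B"

lemma wreath_carrier: "carrier (wreath A B) = (carrier B \<rightarrow>\<^sub>E carrier A) \<times> carrier B"
  by (simp add: wreath_def)

lemma wreath_mult: "(\<alpha>, x) \<otimes>\<^bsub>wreath A B\<^esub> (\<beta>, y) =
   ((\<lambda>b\<in>carrier B. \<alpha> b \<otimes>\<^bsub>A\<^esub> \<beta> (inv\<^bsub>B\<^esub> x \<otimes>\<^bsub>B\<^esub> b)), x \<otimes>\<^bsub>B\<^esub> y)"
  by (simp add: wreath_def)

lemma wreath_one: "\<one>\<^bsub>wreath A B\<^esub> = ((\<lambda>b\<in>carrier B. \<one>\<^bsub>A\<^esub>), \<one>\<^bsub>B\<^esub>)"
  by (simp add: wreath_def)

lemma group_wreath: "group (wreath A B)"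
proof (rule groupI)
  fix u v w
  assume "u \<in> carrier (wreath A B)" "v \<in> carrier (wreath A B)" "w \<in> carrier (wreath A B)"
  then show "u \<otimes>\<^bsub>wreath A B\<^esub> v \<otimes>\<^bsub>wreath A B\<^esub> w = u \<otimes>\<^bsub>wreath A B\<^esub> (v \<otimes>\<^bsub>wreath A B\<^esub> w)"
    by (cases u, cases v, cases w)
      (auto intro!: restrict_ext simp: wreath_carrier wreath_mult PiE_iff A.m_assoc B.m_assoc
        B.inv_mult_group)
next
  fix u assume u: "u \<in> carrier (wreath A B)"
  obtain \<alpha> x where ux: "u = (\<alpha>, x)" by (cases u)
  with u have \<alpha>: "\<alpha> \<in> carrier B \<rightarrow>\<^sub>E carrier A" and x: "x \<in> carrier B"
    by (auto simp: wreath_carrier)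
  have "(\<lambda>b\<in>carrier B. (\<lambda>c\<in>carrier B. \<one>\<^bsub>A\<^esub>) b \<otimes>\<^bsub>A\<^esub> \<alpha> (inv\<^bsub>B\<^esub> \<one>\<^bsub>B\<^esub> \<otimes>\<^bsub>B\<^esub> b)) = restrict \<alpha> (carrier B)"
    using \<alpha> by (intro restrict_ext) (auto simp: PiE_iff)
  then show "\<one>\<^bsub>wreath A B\<^esub> \<otimes>\<^bsub>wreath A B\<^esub> u = u"
    using \<alpha> x by (simp add: ux wreath_mult wreath_one)
  have "((\<lambda>b\<in>carrier B. inv\<^bsub>A\<^esub> \<alpha> (x \<otimes>\<^bsub>B\<^esub> b)), inv\<^bsub>B\<^esub> x) \<in> carrier (wreath A B) \<and>
      ((\<lambda>b\<in>carrier B. inv\<^bsub>A\<^esub> \<alpha> (x \<otimes>\<^bsub>B\<^esub> b)), inv\<^bsub>B\<^esub> x) \<otimes>\<^bsub>wreath A B\<^esub> u = \<one>\<^bsub>wreath A B\<^esub>"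
    using \<alpha> x by (auto intro!: restrict_ext simp: ux wreath_carrier wreath_mult wreath_one PiE_iff)
  then show "\<exists>v\<in>carrier (wreath A B). v \<otimes>\<^bsub>wreath A B\<^esub> u = \<one>\<^bsub>wreath A B\<^esub>" by blast
qed (auto simp: wreath_carrier wreath_mult wreath_one PiE_iff)

sublocale W: group "wreath A B" by (rule group_wreath)

context
  fixes \<alpha> x assumes \<alpha>: "\<alpha> \<in> carrier B \<rightarrow>\<^sub>E carrier A" and x: "x \<in> carrier B"
begin

lemma cycle_prod_closed: "b \<in> carrier B \<Longrightarrow> cyc \<alpha> x n b \<in> carrier A"
  using \<alpha> x by (induction n) (auto simp: PiE_iff)

lemma wreath_pow: "(\<alpha>, x) [^]\<^bsub>wreath A B\<^esub> n = ((\<lambda>b\<in>carrier B. cyc \<alpha> x n b), x [^]\<^bsub>B\<^esub> n)"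
proof (induction n)
  case (Suc n)
  then show ?case
    using x by (auto intro!: restrict_ext simp: wreath_mult B.nat_pow_inv)
qed (simp add: wreath_one restrict_def)

lemma cycle_prod_add:
  assumes b: "b \<in> carrier B"
  shows "cyc \<alpha> x (n + m) b = cyc \<alpha> x n b \<otimes>\<^bsub>A\<^esub> cyc \<alpha> x m ((inv\<^bsub>B\<^esub> x) [^]\<^bsub>B\<^esub> n \<otimes>\<^bsub>B\<^esub> b)"
proof (induction m)
  case (Suc m)
  have "(inv\<^bsub>B\<^esub> x) [^]\<^bsub>B\<^esub> m \<otimes>\<^bsub>B\<^esub> ((inv\<^bsub>B\<^esub> x) [^]\<^bsub>B\<^esub> n \<otimes>\<^bsub>B\<^esub> b)
      = (inv\<^bsub>B\<^esub> x) [^]\<^bsub>B\<^esub> (n + m) \<otimes>\<^bsub>B\<^esub> b"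
    using x b by (simp add: B.m_assoc[symmetric] B.nat_pow_mult add.commute)
  moreover have "(inv\<^bsub>B\<^esub> x) [^]\<^bsub>B\<^esub> n \<otimes>\<^bsub>B\<^esub> b \<in> carrier B" using x b by simp
  ultimately show ?case
    using Suc b cycle_prod_closed \<alpha> x by (simp add: A.m_assoc PiE_iff)
qed (use b cycle_prod_closed in simp)

lemma cycle_prod_mult_ord:
  assumes b: "b \<in> carrier B"
  shows "cyc \<alpha> x (B.ord x * t) b = cyc \<alpha> x (B.ord x) b [^]\<^bsub>A\<^esub> t"
proof (induction t)
  case (Suc t)
  have "(inv\<^bsub>B\<^esub> x) [^]\<^bsub>B\<^esub> (B.ord x * t) = \<one>\<^bsub>B\<^esub>"
    using x by (simp add: B.nat_pow_inv B.nat_pow_pow[symmetric])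
  then show ?case
    using Suc b cycle_prod_add[OF b, of "B.ord x * t" "B.ord x"] by (simp add: add.commute)
qed simp

lemma ord_wreath:
  "W.ord (\<alpha>, x) = B.ord x * Lcm ((\<lambda>b. A.ord (cyc \<alpha> x (B.ord x) b)) ` carrier B)"
proof -
  define k where "k = B.ord x"
  define L where "L = Lcm ((\<lambda>b. A.ord (cyc \<alpha> x k b)) ` carrier B)"
  have cycle_roots: "(\<forall>b\<in>carrier B. cyc \<alpha> x (k * t) b = \<one>\<^bsub>A\<^esub>) \<longleftrightarrow> L dvd t" for t
    using cycle_prod_mult_ord cycle_prod_closed
    by (simp add: k_def L_def Lcm_dvd_iff A.pow_eq_id)
  have "(\<alpha>, x) [^]\<^bsub>wreath A B\<^esub> n = \<one>\<^bsub>wreath A B\<^esub> \<longleftrightarrow> k * L dvd n" for n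
  proof -
    have "(\<alpha>, x) [^]\<^bsub>wreath A B\<^esub> n = \<one>\<^bsub>wreath A B\<^esub>
        \<longleftrightarrow> (\<forall>b\<in>carrier B. cyc \<alpha> x n b = \<one>\<^bsub>A\<^esub>) \<and> k dvd n"
      using x by (auto simp: wreath_pow wreath_one fun_eq_iff B.pow_eq_id k_def)
    also have "\<dots> \<longleftrightarrow> k * L dvd n"
    proof
      assume "(\<forall>b\<in>carrier B. cyc \<alpha> x n b = \<one>\<^bsub>A\<^esub>) \<and> k dvd n"
      then obtain t where "n = k * t" "L dvd t" using cycle_roots by (auto elim!: dvdE)
      then show "k * L dvd n" by simp
    next
      assume "k * L dvd n"
      then obtain t where "n = k * (L * t)" by (metis dvdE mult.assoc)
      then show "(\<forall>b\<in>carrier B. cyc \<alpha> x n b = \<one>\<^bsub>A\<^esub>) \<and> k dvd n"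
        using cycle_roots[of "L * t"] by simp
    qed
    finally show ?thesis .
  qed
  then show ?thesis
    using \<alpha> x by (simp add: W.ord_unique wreath_carrier k_def L_def)
qed

end

lemma cycle_prod_cong:
  assumes "\<And>i. i < n \<Longrightarrow> \<alpha> ((inv\<^bsub>B\<^esub> x) [^]\<^bsub>B\<^esub> i \<otimes>\<^bsub>B\<^esub> b) = \<beta> ((inv\<^bsub>B\<^esub> x) [^]\<^bsub>B\<^esub> i \<otimes>\<^bsub>B\<^esub> b)"
  shows "cyc \<alpha> x n b = cyc \<beta> x n b"
  using assms by (induction n) auto

end

locale finite_wreath_groups = wreath_groups +
  assumes finite_A: "finite (carrier A)" and finite_B: "finite (carrier B)"
begin

definition coset_reps where
  "coset_reps x = (\<lambda>C. SOME c. c \<in> C) ` RCOSETS B (generate B {x})"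

definition cycle_transform where
  "cycle_transform x \<alpha> =
     (\<lambda>b\<in>carrier B. if b \<in> coset_reps x then cyc \<alpha> x (B.ord x) b else \<alpha> b)"

context
  fixes x assumes x: "x \<in> carrier B"
begin

lemma B_ord_pos: "B.ord x > 0"
  using B.ord_ge_1[OF finite_B x] by simp

lemma subgroup_generate: "subgroup (generate B {x}) B"
  using B.generate_is_subgroup x by simp

lemma generate_eq_powers: "generate B {x} = {x [^]\<^bsub>B\<^esub> i | i::nat. True}"
  using B.generate_pow_nat[OF x] B_ord_pos by simp

lemma rcoset_rep:
  assumes C: "C \<in> RCOSETS B (generate B {x})"
  shows "(SOME c. c \<in> C) \<in> carrier B" "C = generate B {x} #>\<^bsub>B\<^esub> (SOME c. c \<in> C)"
proof -
  obtain a where a: "a \<in> carrier B" "C = generate B {x} #>\<^bsub>B\<^esub> a"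
    using C unfolding RCOSETS_def by auto
  then have "a \<in> C" using B.rcos_self[OF a(1) subgroup_generate] by simp
  then have "(SOME c. c \<in> C) \<in> C" by (rule someI)
  then show "(SOME c. c \<in> C) \<in> carrier B" "C = generate B {x} #>\<^bsub>B\<^esub> (SOME c. c \<in> C)"
    using a B.repr_independence[OF _ a(1) subgroup_generate]
      subgroup.elemrcos_carrier[OF subgroup_generate B.is_group a(1)] by auto
qed

lemma coset_reps_subset: "coset_reps x \<subseteq> carrier B"
  unfolding coset_reps_def using rcoset_rep(1) by auto

lemma some_rcoset_of_coset_rep:
  assumes "r \<in> coset_reps x"
  shows "(SOME c. c \<in> generate B {x} #>\<^bsub>B\<^esub> r) = r"
  using assms rcoset_rep(2) unfolding coset_reps_def by force

lemma card_coset_reps: "card (coset_reps x) * B.ord x = card (carrier B)"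
proof -
  have "inj_on (\<lambda>C. SOME c. c \<in> C) (RCOSETS B (generate B {x}))"
    by (rule inj_onI) (metis rcoset_rep(2))
  then have "card (coset_reps x) = card (RCOSETS B (generate B {x}))"
    unfolding coset_reps_def by (rule card_image)
  then show ?thesis
    using B.lagrange[OF subgroup_generate] B.generate_pow_card[OF x] by (simp add: order_def)
qed

lemma coset_reps_cover:
  assumes b: "b \<in> carrier B"
  obtains r i where "r \<in> coset_reps x" "b = x [^]\<^bsub>B\<^esub> (i::nat) \<otimes>\<^bsub>B\<^esub> r"
proof -
  define C where "C = generate B {x} #>\<^bsub>B\<^esub> b"
  have C: "C \<in> RCOSETS B (generate B {x})"
    unfolding C_def using b subgroup_generate by (intro B.rcosetsI) (auto dest: subgroup.subset)
  then have r: "(SOME c. c \<in> C) \<in> coset_reps x" unfolding coset_reps_def by blast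
  have "b \<in> C" unfolding C_def by (rule B.rcos_self[OF b subgroup_generate])
  then obtain i :: nat where "b = x [^]\<^bsub>B\<^esub> i \<otimes>\<^bsub>B\<^esub> (SOME c. c \<in> C)"
    using rcoset_rep(2)[OF C] generate_eq_powers unfolding r_coset_def by auto
  with r that show ?thesis by blast
qed

lemma inv_pow_mult_coset_rep_notin:
  assumes r: "r \<in> coset_reps x" and i: "0 < i" "i < B.ord x"
  shows "(inv\<^bsub>B\<^esub> x) [^]\<^bsub>B\<^esub> i \<otimes>\<^bsub>B\<^esub> r \<notin> coset_reps x"
proof
  assume r': "(inv\<^bsub>B\<^esub> x) [^]\<^bsub>B\<^esub> i \<otimes>\<^bsub>B\<^esub> r \<in> coset_reps x"
  have rB: "r \<in> carrier B" using r coset_reps_subset by auto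
  have "x [^]\<^bsub>B\<^esub> i \<in> generate B {x}" using generate_eq_powers by blast
  then have "inv\<^bsub>B\<^esub> (x [^]\<^bsub>B\<^esub> i) \<in> generate B {x}"
    by (rule subgroup.m_inv_closed[OF subgroup_generate])
  then have "(inv\<^bsub>B\<^esub> x) [^]\<^bsub>B\<^esub> i \<in> generate B {x}" using x by (simp add: B.nat_pow_inv)
  then have "generate B {x} #>\<^bsub>B\<^esub> ((inv\<^bsub>B\<^esub> x) [^]\<^bsub>B\<^esub> i \<otimes>\<^bsub>B\<^esub> r) = generate B {x} #>\<^bsub>B\<^esub> r"
    using B.repr_independence[OF _ rB subgroup_generate] unfolding r_coset_def by blast
  then have "(inv\<^bsub>B\<^esub> x) [^]\<^bsub>B\<^esub> i \<otimes>\<^bsub>B\<^esub> r = r"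
    using some_rcoset_of_coset_rep[OF r] some_rcoset_of_coset_rep[OF r'] by metis
  then have "B.ord x dvd i"
    using x rB B.pow_eq_id[of "inv\<^bsub>B\<^esub> x" i] by simp
  then show False using i by (simp add: nat_dvd_not_less)
qed

lemma inv_pow_ord_minus_one: "(inv\<^bsub>B\<^esub> x) [^]\<^bsub>B\<^esub> (B.ord x - 1) = x"
proof -
  have "(inv\<^bsub>B\<^esub> x) [^]\<^bsub>B\<^esub> (B.ord x - 1) \<otimes>\<^bsub>B\<^esub> inv\<^bsub>B\<^esub> x = (inv\<^bsub>B\<^esub> x) [^]\<^bsub>B\<^esub> B.ord x"
    using x B_ord_pos B.nat_pow_Suc[of "inv\<^bsub>B\<^esub> x" "B.ord x - 1"] by simp
  also have "\<dots> = \<one>\<^bsub>B\<^esub>" using x by (simp add: B.nat_pow_inv)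
  finally show ?thesis
    using x by (metis B.inv_closed B.inv_equality B.inv_inv B.nat_pow_closed)
qed

context
  fixes \<alpha> assumes \<alpha>: "\<alpha> \<in> carrier B \<rightarrow>\<^sub>E carrier A"
begin

lemma cycle_prod_ord_split:
  assumes b: "b \<in> carrier B"
  shows "cyc \<alpha> x (B.ord x) b = \<alpha> b \<otimes>\<^bsub>A\<^esub> cyc \<alpha> x (B.ord x - 1) (inv\<^bsub>B\<^esub> x \<otimes>\<^bsub>B\<^esub> b)"
  using cycle_prod_add[OF \<alpha> x b, of 1 "B.ord x - 1"] B_ord_pos \<alpha> x b by (simp add: PiE_iff)

lemma ord_cycle_prod_shift:
  assumes b: "b \<in> carrier B"
  shows "A.ord (cyc \<alpha> x (B.ord x) (x \<otimes>\<^bsub>B\<^esub> b)) = A.ord (cyc \<alpha> x (B.ord x) b)"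
proof -
  have "cyc \<alpha> x (B.ord x) b = cyc \<alpha> x (B.ord x - 1) b \<otimes>\<^bsub>A\<^esub> \<alpha> (x \<otimes>\<^bsub>B\<^esub> b)"
    using cycle_prod_add[OF \<alpha> x b, of "B.ord x - 1" 1] B_ord_pos inv_pow_ord_minus_one \<alpha> x b
    by (simp add: PiE_iff)
  moreover have "cyc \<alpha> x (B.ord x) (x \<otimes>\<^bsub>B\<^esub> b) = \<alpha> (x \<otimes>\<^bsub>B\<^esub> b) \<otimes>\<^bsub>A\<^esub> cyc \<alpha> x (B.ord x - 1) b"
    using cycle_prod_ord_split[of "x \<otimes>\<^bsub>B\<^esub> b"] x b by (simp add: B.m_assoc[symmetric])
  ultimately show ?thesis
    using A.ord_mult_comm \<alpha> x b cycle_prod_closed[OF \<alpha> x b] by (simp add: PiE_iff)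
qed

lemma ord_cycle_prod_shift_pow:
  assumes b: "b \<in> carrier B"
  shows "A.ord (cyc \<alpha> x (B.ord x) (x [^]\<^bsub>B\<^esub> (i::nat) \<otimes>\<^bsub>B\<^esub> b)) = A.ord (cyc \<alpha> x (B.ord x) b)"
proof (induction i)
  case (Suc i)
  have "x [^]\<^bsub>B\<^esub> Suc i \<otimes>\<^bsub>B\<^esub> b = x \<otimes>\<^bsub>B\<^esub> (x [^]\<^bsub>B\<^esub> i \<otimes>\<^bsub>B\<^esub> b)"
    using x b by (metis B.m_assoc B.nat_pow_Suc2 B.nat_pow_closed)
  then show ?case using Suc x b by (simp add: ord_cycle_prod_shift)
qed (use b in simp)

end

lemma cycle_transform_PiE:
  "\<alpha> \<in> carrier B \<rightarrow>\<^sub>E carrier A \<Longrightarrow> cycle_transform x \<alpha> \<in> carrier B \<rightarrow>\<^sub>E carrier A"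
  using cycle_prod_closed x unfolding cycle_transform_def by (auto simp: PiE_iff)

lemma inj_on_cycle_transform: "inj_on (cycle_transform x) (carrier B \<rightarrow>\<^sub>E carrier A)"
proof (rule inj_onI)
  fix \<alpha> \<beta>
  assume \<alpha>: "\<alpha> \<in> carrier B \<rightarrow>\<^sub>E carrier A" and \<beta>: "\<beta> \<in> carrier B \<rightarrow>\<^sub>E carrier A"
    and eq: "cycle_transform x \<alpha> = cycle_transform x \<beta>"
  have off: "\<alpha> b = \<beta> b" if "b \<in> carrier B - coset_reps x" for b
    using fun_cong[OF eq, of b] that by (simp add: cycle_transform_def)
  have "\<alpha> r = \<beta> r" if r: "r \<in> coset_reps x" for r
  proof -
    have rB: "r \<in> carrier B" using r coset_reps_subset by auto
    \<comment> \<open>the tail of the cycle product at \<open>r\<close> only involves non-representatives\<close>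
    have "(inv\<^bsub>B\<^esub> x) [^]\<^bsub>B\<^esub> Suc i \<otimes>\<^bsub>B\<^esub> r \<in> carrier B - coset_reps x" if "i < B.ord x - 1" for i
      using inv_pow_mult_coset_rep_notin[OF r, of "Suc i"] that x rB by simp
    then have tail: "cyc \<alpha> x (B.ord x - 1) (inv\<^bsub>B\<^esub> x \<otimes>\<^bsub>B\<^esub> r) = cyc \<beta> x (B.ord x - 1) (inv\<^bsub>B\<^esub> x \<otimes>\<^bsub>B\<^esub> r)"
      using x rB by (intro cycle_prod_cong off) (simp add: B.m_assoc)
    have "cyc \<alpha> x (B.ord x) r = cyc \<beta> x (B.ord x) r"
      using fun_cong[OF eq, of r] r rB by (simp add: cycle_transform_def)
    then show ?thesis
      using cycle_prod_ord_split[OF \<alpha> rB] cycle_prod_ord_split[OF \<beta> rB] tail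
        cycle_prod_closed[OF \<beta> x] \<alpha> \<beta> x rB
      by (simp add: PiE_iff A.r_cancel)
  qed
  then show "\<alpha> = \<beta>"
    using off \<alpha> \<beta> by (metis Diff_iff PiE_ext)
qed

lemma bij_betw_cycle_transform:
  "bij_betw (cycle_transform x) (carrier B \<rightarrow>\<^sub>E carrier A) (carrier B \<rightarrow>\<^sub>E carrier A)"
proof -
  have "cycle_transform x ` (carrier B \<rightarrow>\<^sub>E carrier A) = carrier B \<rightarrow>\<^sub>E carrier A"
    using finite_A finite_B inj_on_cycle_transform cycle_transform_PiE
    by (intro endo_inj_surj) (auto simp: finite_PiE)
  then show ?thesis
    using inj_on_cycle_transform by (simp add: bij_betw_def)
qed

lemma cycle_prod_roots_iff:
  fixes m :: nat
  assumes \<alpha>: "\<alpha> \<in> carrier B \<rightarrow>\<^sub>E carrier A"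
  shows "(\<forall>b\<in>carrier B. cyc \<alpha> x (B.ord x) b [^]\<^bsub>A\<^esub> m = \<one>\<^bsub>A\<^esub>) \<longleftrightarrow>
         (\<forall>r\<in>coset_reps x. cycle_transform x \<alpha> r [^]\<^bsub>A\<^esub> m = \<one>\<^bsub>A\<^esub>)"
proof
  assume "\<forall>b\<in>carrier B. cyc \<alpha> x (B.ord x) b [^]\<^bsub>A\<^esub> m = \<one>\<^bsub>A\<^esub>"
  then show "\<forall>r\<in>coset_reps x. cycle_transform x \<alpha> r [^]\<^bsub>A\<^esub> m = \<one>\<^bsub>A\<^esub>"
    using coset_reps_subset by (auto simp: cycle_transform_def)
next
  assume reps: "\<forall>r\<in>coset_reps x. cycle_transform x \<alpha> r [^]\<^bsub>A\<^esub> m = \<one>\<^bsub>A\<^esub>"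
  show "\<forall>b\<in>carrier B. cyc \<alpha> x (B.ord x) b [^]\<^bsub>A\<^esub> m = \<one>\<^bsub>A\<^esub>"
  proof
    fix b assume b: "b \<in> carrier B"
    then obtain r i where r: "r \<in> coset_reps x" "b = x [^]\<^bsub>B\<^esub> (i::nat) \<otimes>\<^bsub>B\<^esub> r"
      by (rule coset_reps_cover)
    then have rB: "r \<in> carrier B" using coset_reps_subset by auto
    then have "cyc \<alpha> x (B.ord x) r [^]\<^bsub>A\<^esub> m = \<one>\<^bsub>A\<^esub>"
      using reps r by (auto simp: cycle_transform_def)
    then show "cyc \<alpha> x (B.ord x) b [^]\<^bsub>A\<^esub> m = \<one>\<^bsub>A\<^esub>"
      using r b rB ord_cycle_prod_shift_pow[OF \<alpha>, of r i] cycle_prod_closed[OF \<alpha> x]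
      by (simp add: A.pow_eq_id)
  qed
qed

lemma card_cycle_prod_roots:
  fixes m :: nat
  shows "card {\<alpha> \<in> carrier B \<rightarrow>\<^sub>E carrier A. \<forall>b\<in>carrier B. cyc \<alpha> x (B.ord x) b [^]\<^bsub>A\<^esub> m = \<one>\<^bsub>A\<^esub>}
   = card {g \<in> carrier A. g [^]\<^bsub>A\<^esub> m = \<one>\<^bsub>A\<^esub>} ^ card (coset_reps x)
     * card (carrier A) ^ (card (carrier B) - card (coset_reps x))"
proof -
  define D where "D = carrier B \<rightarrow>\<^sub>E carrier A"
  define S where "S = PiE (carrier B) (\<lambda>b. if b \<in> coset_reps x then {g \<in> carrier A. g [^]\<^bsub>A\<^esub> m = \<one>\<^bsub>A\<^esub>} else carrier A)"
  have "S \<subseteq> D" by (auto simp: S_def D_def PiE_iff split: if_splits)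
  moreover have "{\<alpha> \<in> D. \<forall>b\<in>carrier B. cyc \<alpha> x (B.ord x) b [^]\<^bsub>A\<^esub> m = \<one>\<^bsub>A\<^esub>} = {\<alpha> \<in> D. cycle_transform x \<alpha> \<in> S}"
  proof (intro Collect_cong conj_cong refl)
    fix \<alpha> assume "\<alpha> \<in> D"
    then show "(\<forall>b\<in>carrier B. cyc \<alpha> x (B.ord x) b [^]\<^bsub>A\<^esub> m = \<one>\<^bsub>A\<^esub>) \<longleftrightarrow> cycle_transform x \<alpha> \<in> S"
      using cycle_prod_roots_iff[of \<alpha> m] cycle_transform_PiE[of \<alpha>] coset_reps_subset
      by (auto simp: S_def D_def PiE_iff)
  qed
  ultimately have "card {\<alpha> \<in> D. \<forall>b\<in>carrier B. cyc \<alpha> x (B.ord x) b [^]\<^bsub>A\<^esub> m = \<one>\<^bsub>A\<^esub>} = card S"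
    using bij_betw_cycle_transform unfolding D_def by (simp add: card_preimage_bij_betw)
  also have "card S = card {g \<in> carrier A. g [^]\<^bsub>A\<^esub> m = \<one>\<^bsub>A\<^esub>} ^ card (coset_reps x)
      * card (carrier A) ^ card (carrier B - coset_reps x)"
    using finite_B coset_reps_subset
    by (simp add: S_def card_PiE if_distrib[where f = card] prod.If_cases Int_absorb1 Diff_eq)
  also have "card (carrier B - coset_reps x) = card (carrier B) - card (coset_reps x)"
    using finite_B coset_reps_subset by (simp add: card_Diff_subset finite_subset)
  finally show ?thesis unfolding D_def .
qed

lemma sum_ord_wreath_fixed:
  "(\<Sum>\<alpha> \<in> carrier B \<rightarrow>\<^sub>E carrier A. real (W.ord (\<alpha>, x))) = real (B.ord x) *
     (\<Sum>m | m dvd card (carrier A). real m * tau (card (carrier A) div m)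
        * real (card {g \<in> carrier A. g [^]\<^bsub>A\<^esub> m = \<one>\<^bsub>A\<^esub>} ^ card (coset_reps x)
          * card (carrier A) ^ (card (carrier B) - card (coset_reps x))))"
proof -
  define D where "D = carrier B \<rightarrow>\<^sub>E carrier A"
  define L where "L \<alpha> = Lcm ((\<lambda>b. A.ord (cyc \<alpha> x (B.ord x) b)) ` carrier B)" for \<alpha>
  have "L \<alpha> dvd card (carrier A)" if "\<alpha> \<in> D" for \<alpha>
    using that cycle_prod_closed x A.ord_dvd_group_order
    by (auto simp: L_def D_def Lcm_dvd_iff order_def)
  moreover have "{\<alpha> \<in> D. L \<alpha> dvd m} =
      {\<alpha> \<in> D. \<forall>b\<in>carrier B. cyc \<alpha> x (B.ord x) b [^]\<^bsub>A\<^esub> m = \<one>\<^bsub>A\<^esub>}" for m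
    using cycle_prod_closed x by (auto simp: L_def D_def Lcm_dvd_iff A.pow_eq_id)
  ultimately have "(\<Sum>\<alpha> \<in> D. real (L \<alpha>)) = (\<Sum>m | m dvd card (carrier A). real m * tau (card (carrier A) div m)
        * real (card {g \<in> carrier A. g [^]\<^bsub>A\<^esub> m = \<one>\<^bsub>A\<^esub>} ^ card (coset_reps x)
          * card (carrier A) ^ (card (carrier B) - card (coset_reps x))))"
    using finite_A finite_B A.carrier_not_empty
    by (subst sum_divisor_values_as_counts)
      (auto simp: D_def finite_PiE card_gt_0_iff card_cycle_prod_roots intro!: sum.cong)
  moreover have "(\<Sum>\<alpha> \<in> D. real (W.ord (\<alpha>, x))) = real (B.ord x) * (\<Sum>\<alpha> \<in> D. real (L \<alpha>))"
    using x by (simp add: D_def L_def ord_wreath sum_distrib_left)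
  ultimately show ?thesis unfolding D_def by simp
qed

end

lemma sum_ord_wreath:
  "(\<Sum>g\<in>carrier (wreath A B). real (W.ord g)) =
   (\<Sum>n | n dvd card (carrier B).
      real (card {x \<in> carrier B. B.ord x = card (carrier B) div n}) * (real (card (carrier B) div n) *
      (\<Sum>m | m dvd card (carrier A). real m * tau (card (carrier A) div m)
        * real (card {g \<in> carrier A. g [^]\<^bsub>A\<^esub> m = \<one>\<^bsub>A\<^esub>} ^ n * card (carrier A) ^ (card (carrier B) - n)))))"
  (is "_ = (\<Sum>n | n dvd ?N. real (card {x \<in> carrier B. B.ord x = ?N div n}) * ?F n)")
proof -
  have N: "?N > 0" using finite_B B.carrier_not_empty by (simp add: card_gt_0_iff)
  have ord_dvd: "B.ord x dvd ?N" if "x \<in> carrier B" for x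
    using B.ord_dvd_group_order[OF that] by (simp add: order_def)
  have quot_dvd: "?N div B.ord x dvd ?N" if "x \<in> carrier B" for x
    using ord_dvd[OF that] by auto
  have "(\<Sum>g\<in>carrier (wreath A B). real (W.ord g))
      = (\<Sum>\<alpha> \<in> carrier B \<rightarrow>\<^sub>E carrier A. \<Sum>x\<in>carrier B. real (W.ord (\<alpha>, x)))"
    by (simp add: wreath_carrier sum.cartesian_product)
  also have "\<dots> = (\<Sum>x\<in>carrier B. \<Sum>\<alpha> \<in> carrier B \<rightarrow>\<^sub>E carrier A. real (W.ord (\<alpha>, x)))"
    by (rule sum.swap)
  also have "\<dots> = (\<Sum>x\<in>carrier B. ?F (?N div B.ord x))"
  proof (intro sum.cong refl)
    fix x assume x: "x \<in> carrier B"
    have c: "card (coset_reps x) * B.ord x = ?N" by (rule card_coset_reps[OF x])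
    then have "card (coset_reps x) \<noteq> 0" using N by (metis mult_is_0 not_gr0)
    then have "card (coset_reps x) = ?N div B.ord x" "?N div (?N div B.ord x) = B.ord x"
      using c B_ord_pos[OF x] by (metis nonzero_mult_div_cancel_left nonzero_mult_div_cancel_right
          not_gr0)+
    then show "(\<Sum>\<alpha> \<in> carrier B \<rightarrow>\<^sub>E carrier A. real (W.ord (\<alpha>, x))) = ?F (?N div B.ord x)"
      by (simp add: sum_ord_wreath_fixed[OF x])
  qed
  also have "\<dots> = (\<Sum>n | n dvd ?N. \<Sum>x | x \<in> carrier B \<and> ?N div B.ord x = n. ?F (?N div B.ord x))"
    using finite_B N quot_dvd by (intro sum.group[symmetric]) auto
  also have "\<dots> = (\<Sum>n | n dvd ?N. real (card {x \<in> carrier B. B.ord x = ?N div n}) * ?F n)"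
  proof (intro sum.cong refl)
    fix n assume "n \<in> {n. n dvd ?N}"
    then have "?N div B.ord x = n \<longleftrightarrow> B.ord x = ?N div n" if "x \<in> carrier B" for x
      using div_eq_iff_div_eq[OF ord_dvd[OF that] _ N, of n] by (metis mem_Collect_eq)
    then have "{x. x \<in> carrier B \<and> ?N div B.ord x = n} = {x \<in> carrier B. B.ord x = ?N div n}"
      by blast
    moreover have "(\<Sum>x | x \<in> carrier B \<and> ?N div B.ord x = n. ?F (?N div B.ord x))
        = (\<Sum>x | x \<in> carrier B \<and> ?N div B.ord x = n. ?F n)"
      by (rule sum.cong) auto
    ultimately show "(\<Sum>x | x \<in> carrier B \<and> ?N div B.ord x = n. ?F (?N div B.ord x))
        = real (card {x \<in> carrier B. B.ord x = ?N div n}) * ?F n"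
      by simp
  qed
  finally show ?thesis .
qed

end

theorem theorem1:
  fixes A :: "('a, 'c) monoid_scheme" and B :: "('b, 'd) monoid_scheme"
  assumes "group A" and "group B"
    and "finite (carrier A)" and "finite (carrier B)"
    and "card (carrier A) \<ge> 2" and "card (carrier B) \<ge> 2"
  shows "avg_order (wreath A B) =
    (\<Sum>m\<in>{m. m dvd card (carrier A)}. \<Sum>n\<in>{n. n dvd card (carrier B)}.
       real m / real n
       * (real (card {g\<in>carrier A. g [^]\<^bsub>A\<^esub> m = \<one>\<^bsub>A\<^esub>}) / real (card (carrier A))) ^ n
       * real (card {g\<in>carrier B. group.ord B g = card (carrier B) div n})
       * tau (card (carrier A) div m))"
proof -
  interpret finite_wreath_groups A B
    using assms by (simp add: finite_wreath_groups_def finite_wreath_groups_axioms_def wreath_groups_def)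
  define M where "M = card (carrier A)"
  define N where "N = card (carrier B)"
  define s where "s m = real (card {g \<in> carrier A. g [^]\<^bsub>A\<^esub> m = \<one>\<^bsub>A\<^esub>})" for m :: nat
  define d where "d k = real (card {x \<in> carrier B. B.ord x = k})" for k
  have pos: "M > 0" "N > 0" using assms by (simp_all add: M_def N_def)
  have "card (carrier (wreath A B)) = M ^ N * N"
    using assms by (simp add: wreath_carrier M_def N_def card_cartesian_product card_funcsetE)
  then have "avg_order (wreath A B) = (\<Sum>n | n dvd N. d (N div n) * (real (N div n) *
      (\<Sum>m | m dvd M. real m * tau (M div m) * (s m ^ n * real M ^ (N - n))))) / (real M ^ N * real N)"
    using sum_ord_wreath by (simp add: avg_order_def M_def N_def s_def d_def)
  also have "\<dots> = (\<Sum>n | n dvd N. \<Sum>m | m dvd M.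
      real m / real n * (s m / real M) ^ n * d (N div n) * tau (M div m))"
    unfolding sum_divide_distrib
  proof (intro sum.cong refl)
    fix n assume "n \<in> {n. n dvd N}"
    then have n: "n > 0" "real (N div n) = real N / real n" "real M ^ (N - n) = real M ^ N / real M ^ n"
      using pos by (auto simp: real_of_nat_div power_diff dvd_imp_le)
    show "d (N div n) * (real (N div n) * (\<Sum>m | m dvd M. real m * tau (M div m) * (s m ^ n * real M ^ (N - n))))
        / (real M ^ N * real N) = (\<Sum>m | m dvd M. real m / real n * (s m / real M) ^ n * d (N div n) * tau (M div m))"
      unfolding n(2,3) sum_distrib_left sum_divide_distrib
      using pos n(1) by (intro sum.cong refl) (simp add: power_divide field_simps)
  qed
  also have "\<dots> = (\<Sum>m | m dvd M. \<Sum>n | n dvd N.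
      real m / real n * (s m / real M) ^ n * d (N div n) * tau (M div m))"
    by (rule sum.swap)
  finally show ?thesis by (simp add: M_def N_def s_def d_def)
qed

end
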